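(* Let $(X,b,m)$ be a connected weighted graph satisfying conditions (B) and (M), let $D\subset X$ and $\Omega:=X\setminus D$. Then $\mathrm{Covr}(D)=\mathrm{Inr}(\Omega)$.
   Context: A weighted graph $(X,b,m)$: $X$ countable, $b:X\times X\to[0,\infty)$ symmetric with $b(x,x)=0$ and $\sum_y b(x,y)<\infty$, $m:X\to(0,\infty)$. Condition (B): $\sup_x\frac{1}{m(x)}\sum_y b(x,y)<\infty$. Condition (M): $\sup_x m(x)<\infty$. A path is $\gamma=(x_0,\dots,x_k)$ with $b(x_j,x_{j+1})>0$, of length $L(\gamma)=\sum_{j=0}^{k-1}1/b(x_j,x_{j+1})$ (trivial paths have length $0$); connected means any two points are joined by a path; $d(x,y)$ is the infimum of lengths of paths from $x$ to $y$. $U_r(x):=\{y:d(x,y)<r\}$, $B_r(x):=\{y:d(x,y)\le r\}$. The inradius is $\mathrm{Inr}(\Omega):=\sup\{r>0:\exists x\in\Omega \text{ with } U_r(x)\subset\Omega\}$ and the covering radius is $\mathrm{Covr}(D):=\inf\{R>0: \bigcup_{p\in D}B_R(p)=X\}\in[0,\infty]$ with $\inf\emptyset=\infty$. *)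

theory Defs
  imports "HOL-Analysis.Analysis"
begin

text \<open>Weighted graph on a countable vertex type 'a (X = UNIV).\<close>
definition weighted_graph :: "('a::countable \<Rightarrow> 'a \<Rightarrow> real) \<Rightarrow> ('a \<Rightarrow> real) \<Rightarrow> bool" where
  "weighted_graph b m \<longleftrightarrow>
     (\<forall>x y. b x y \<ge> 0) \<and> (\<forall>x y. b x y = b y x) \<and> (\<forall>x. b x x = 0) \<and>
     (\<forall>x. (\<lambda>y. b x y) summable_on UNIV) \<and> (\<forall>x. m x > 0)"

definition cond_B :: "('a \<Rightarrow> 'a \<Rightarrow> real) \<Rightarrow> ('a \<Rightarrow> real) \<Rightarrow> bool" where
  "cond_B b m \<longleftrightarrow> (\<exists>C. \<forall>x. (\<Sum>\<^sub>\<infinity>y. b x y) / m x \<le> C)"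

definition cond_M :: "('a \<Rightarrow> real) \<Rightarrow> bool" where
  "cond_M m \<longleftrightarrow> (\<exists>C. \<forall>x. m x \<le> C)"

definition is_path :: "('a \<Rightarrow> 'a \<Rightarrow> real) \<Rightarrow> 'a list \<Rightarrow> bool" where
  "is_path b \<gamma> \<longleftrightarrow> \<gamma> \<noteq> [] \<and> (\<forall>j < length \<gamma> - 1. b (\<gamma>!j) (\<gamma>!(j+1)) > 0)"

definition path_length :: "('a \<Rightarrow> 'a \<Rightarrow> real) \<Rightarrow> 'a list \<Rightarrow> real" where
  "path_length b \<gamma> = (\<Sum>j < length \<gamma> - 1. 1 / b (\<gamma>!j) (\<gamma>!(j+1)))"

definition graph_connected :: "('a \<Rightarrow> 'a \<Rightarrow> real) \<Rightarrow> bool" where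
  "graph_connected b \<longleftrightarrow> (\<forall>x y. \<exists>\<gamma>. is_path b \<gamma> \<and> hd \<gamma> = x \<and> last \<gamma> = y)"

definition gdist :: "('a \<Rightarrow> 'a \<Rightarrow> real) \<Rightarrow> 'a \<Rightarrow> 'a \<Rightarrow> real" where
  "gdist b x y = Inf {path_length b \<gamma> | \<gamma>. is_path b \<gamma> \<and> hd \<gamma> = x \<and> last \<gamma> = y}"

definition open_ball :: "('a \<Rightarrow> 'a \<Rightarrow> real) \<Rightarrow> 'a \<Rightarrow> real \<Rightarrow> 'a set" where
  "open_ball b x r = {y. gdist b x y < r}"

definition closed_ball :: "('a \<Rightarrow> 'a \<Rightarrow> real) \<Rightarrow> 'a \<Rightarrow> real \<Rightarrow> 'a set" where
  "closed_ball b x r = {y. gdist b x y \<le> r}"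

text \<open>Values in [0,\<infinity>] (ennreal): sup of empty set is 0, inf of empty set is \<infinity>.\<close>
definition inradius :: "('a \<Rightarrow> 'a \<Rightarrow> real) \<Rightarrow> 'a set \<Rightarrow> ennreal" where
  "inradius b \<Omega> = Sup (ennreal ` {r. r > 0 \<and> (\<exists>x\<in>\<Omega>. open_ball b x r \<subseteq> \<Omega>)})"

definition covradius :: "('a \<Rightarrow> 'a \<Rightarrow> real) \<Rightarrow> 'a set \<Rightarrow> ennreal" where
  "covradius b D = Inf (ennreal ` {R. R > 0 \<and> (\<Union>p\<in>D. closed_ball b p R) = UNIV})"

end

theory Submission
  imports Defs
begin

text \<open>If \<open>U\<^sub>r(x) \<subseteq> \<Omega>\<close> and the balls \<open>B\<^sub>R(p)\<close>, \<open>p \<in> D\<close>, cover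
  \<open>X\<close>, then \<open>x \<in> B\<^sub>R(p)\<close> for some \<open>p \<in> D \<subseteq> X - U\<^sub>r(x)\<close>, so \<open>r \<le> d(x,p) \<le> R\<close>. Conversely, if
  no ball \<open>U\<^sub>R(x)\<close> fits into \<open>\<Omega>\<close>, every \<open>x \<in> \<Omega>\<close> lies within distance \<open>R\<close> of \<open>D\<close>, and points of
  \<open>D\<close> lie in their own balls; hence every \<open>R\<close> above the inradius is a covering radius.\<close>

lemma is_path_rev:
  assumes sym: "\<And>x y. b x y = b y x" and p: "is_path b \<gamma>"
  shows "is_path b (rev \<gamma>)"
  unfolding is_path_def
proof (intro conjI allI impI)
  show "rev \<gamma> \<noteq> []" using p by (simp add: is_path_def)
  fix j assume j: "j < length (rev \<gamma>) - 1"
  define i where "i = length \<gamma> - 2 - j"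
  have i: "i < length \<gamma> - 1" and "Suc i = length \<gamma> - 1 - j" using j by (auto simp: i_def)
  hence "rev \<gamma> ! j = \<gamma> ! (i + 1)" "rev \<gamma> ! (j + 1) = \<gamma> ! i" using j by (simp_all add: rev_nth i_def)
  moreover have "b (\<gamma> ! i) (\<gamma> ! (i + 1)) > 0" using p i by (simp add: is_path_def)
  ultimately show "b (rev \<gamma> ! j) (rev \<gamma> ! (j + 1)) > 0" using sym by simp
qed

lemma path_length_rev:
  assumes sym: "\<And>x y. b x y = b y x"
  shows "path_length b (rev \<gamma>) = path_length b \<gamma>"
proof -
  define n where "n = length \<gamma>"
  have "path_length b (rev \<gamma>) = (\<Sum>j<n - 1. 1 / b (\<gamma> ! (n - 1 - Suc j)) (\<gamma> ! (n - 1 - Suc j + 1)))"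
    unfolding path_length_def length_rev n_def[symmetric]
  proof (rule sum.cong[OF refl])
    fix j assume "j \<in> {..<n - 1}"
    hence "rev \<gamma> ! j = \<gamma> ! (n - 1 - Suc j + 1)" "rev \<gamma> ! (j + 1) = \<gamma> ! (n - 1 - Suc j)"
      by (auto simp: rev_nth n_def Suc_diff_Suc)
    thus "1 / b (rev \<gamma> ! j) (rev \<gamma> ! (j + 1)) = 1 / b (\<gamma> ! (n - 1 - Suc j)) (\<gamma> ! (n - 1 - Suc j + 1))"
      using sym by simp
  qed
  also have "\<dots> = (\<Sum>j<n - 1. 1 / b (\<gamma> ! j) (\<gamma> ! (j + 1)))"
    by (rule sum.nat_diff_reindex[where g = "\<lambda>j. 1 / b (\<gamma> ! j) (\<gamma> ! (j + 1))"])
  finally show ?thesis by (simp add: path_length_def n_def)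
qed

lemma gdist_sym:
  assumes sym: "\<And>x y. b x y = b y x"
  shows "gdist b x y = gdist b y x"
proof -
  have "{path_length b \<gamma> | \<gamma>. is_path b \<gamma> \<and> hd \<gamma> = x \<and> last \<gamma> = y}
      \<subseteq> {path_length b \<gamma> | \<gamma>. is_path b \<gamma> \<and> hd \<gamma> = y \<and> last \<gamma> = x}" for x y
  proof
    fix l assume "l \<in> {path_length b \<gamma> | \<gamma>. is_path b \<gamma> \<and> hd \<gamma> = x \<and> last \<gamma> = y}"
    then obtain \<gamma> where \<gamma>: "l = path_length b \<gamma>" "is_path b \<gamma>" "hd \<gamma> = x" "last \<gamma> = y"
      by blast
    hence "\<gamma> \<noteq> []" by (simp add: is_path_def)
    hence "l = path_length b (rev \<gamma>) \<and> is_path b (rev \<gamma>) \<and> hd (rev \<gamma>) = y \<and> last (rev \<gamma>) = x"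
      using \<gamma> is_path_rev[of b, OF sym] path_length_rev[of b, OF sym] by (simp add: hd_rev last_rev)
    thus "l \<in> {path_length b \<gamma> | \<gamma>. is_path b \<gamma> \<and> hd \<gamma> = y \<and> last \<gamma> = x}"
      by blast
  qed
  hence "{path_length b \<gamma> | \<gamma>. is_path b \<gamma> \<and> hd \<gamma> = x \<and> last \<gamma> = y}
      = {path_length b \<gamma> | \<gamma>. is_path b \<gamma> \<and> hd \<gamma> = y \<and> last \<gamma> = x}" by blast
  thus ?thesis by (simp add: gdist_def)
qed

lemma path_length_nonneg: "is_path b \<gamma> \<Longrightarrow> 0 \<le> path_length b \<gamma>"
  unfolding is_path_def path_length_def by (intro sum_nonneg) (simp add: less_imp_le)

lemma gdist_self_le: "gdist b x x \<le> 0"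
  unfolding gdist_def
proof (rule cInf_lower)
  show "0 \<in> {path_length b \<gamma> | \<gamma>. is_path b \<gamma> \<and> hd \<gamma> = x \<and> last \<gamma> = x}"
    by (rule CollectI, rule exI[of _ "[x]"]) (simp add: is_path_def path_length_def)
  show "bdd_below {path_length b \<gamma> | \<gamma>. is_path b \<gamma> \<and> hd \<gamma> = x \<and> last \<gamma> = x}"
    by (rule bdd_belowI[of _ 0]) (auto intro: path_length_nonneg)
qed

lemma Inf_ennreal_eq_Sup_ennreal_of_cut:
  assumes below: "\<And>a c. a \<in> A \<Longrightarrow> c \<in> C \<Longrightarrow> a \<le> c"
    and cut: "\<And>R. R > 0 \<Longrightarrow> R \<notin> A \<Longrightarrow> R \<in> C"
  shows "Inf (ennreal ` C) = Sup (ennreal ` A)"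
proof (rule antisym)
  show "Inf (ennreal ` C) \<le> Sup (ennreal ` A)"
  proof (rule dense_ge)
    fix z assume z: "Sup (ennreal ` A) < z"
    show "Inf (ennreal ` C) \<le> z"
    proof (cases "z = top")
      case False
      define R where "R = enn2real z"
      have zR: "z = ennreal R" using False by (simp add: R_def ennreal_enn2real_if)
      have "R > 0" using order_le_less_trans[OF zero_le z] zR by simp
      moreover have "R \<notin> A"
        using z zR Sup_upper[of "ennreal R" "ennreal ` A"] by auto
      ultimately have "R \<in> C" by (rule cut)
      thus ?thesis using zR by (simp add: Inf_lower)
    qed simp
  qed
  show "Sup (ennreal ` A) \<le> Inf (ennreal ` C)"
    using below by (auto intro!: Sup_least Inf_greatest ennreal_leI)
qed

lemma inball_radius_le_covering_radius:
  assumes sym: "\<And>x y. b x y = b y x"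
    and x: "x \<notin> D" "open_ball b x r \<subseteq> UNIV - D"
    and cover: "(\<Union>p\<in>D. closed_ball b p R) = UNIV"
  shows "r \<le> R"
proof -
  obtain p where p: "p \<in> D" "gdist b p x \<le> R"
    using cover by (auto simp: closed_ball_def)
  have "p \<notin> open_ball b x r" using x p by auto
  hence "r \<le> gdist b x p" by (simp add: open_ball_def)
  thus ?thesis using p gdist_sym[of b, OF sym, of x p] by simp
qed

lemma covering_if_no_inball:
  assumes sym: "\<And>x y. b x y = b y x" and "R > 0"
    and no_inball: "\<And>x. x \<notin> D \<Longrightarrow> \<not> open_ball b x R \<subseteq> UNIV - D"
  shows "(\<Union>p\<in>D. closed_ball b p R) = UNIV"
proof -
  have "y \<in> (\<Union>p\<in>D. closed_ball b p R)" for y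
  proof (cases "y \<in> D")
    case True
    moreover have "y \<in> closed_ball b y R" using gdist_self_le[of b y] \<open>R > 0\<close>
      by (simp add: closed_ball_def)
    ultimately show ?thesis by blast
  next
    case False
    then obtain p where "p \<in> D" "gdist b y p < R"
      using no_inball by (auto simp: open_ball_def)
    hence "y \<in> closed_ball b p R"
      using gdist_sym[of b, OF sym, of y p] by (simp add: closed_ball_def)
    thus ?thesis using \<open>p \<in> D\<close> by blast
  qed
  thus ?thesis by blast
qed

theorem lemma3p6:
  fixes b :: "'a::countable \<Rightarrow> 'a \<Rightarrow> real" and m :: "'a \<Rightarrow> real" and D :: "'a set"
  assumes "weighted_graph b m" and "graph_connected b" and "cond_B b m" and "cond_M m"
  shows "covradius b D = inradius b (UNIV - D)"
proof -
  have sym: "\<And>x y. b x y = b y x" using assms(1) by (simp add: weighted_graph_def)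
  show ?thesis
    unfolding covradius_def inradius_def
  proof (rule Inf_ennreal_eq_Sup_ennreal_of_cut)
    fix r R
    assume "r \<in> {r. r > 0 \<and> (\<exists>x\<in>UNIV - D. open_ball b x r \<subseteq> UNIV - D)}"
      and "R \<in> {R. R > 0 \<and> (\<Union>p\<in>D. closed_ball b p R) = UNIV}"
    then obtain x where "x \<notin> D" "open_ball b x r \<subseteq> UNIV - D"
      and "(\<Union>p\<in>D. closed_ball b p R) = UNIV" by auto
    thus "r \<le> R" by (rule inball_radius_le_covering_radius[of b, OF sym])
  next
    fix R :: real
    assume "R > 0" and "R \<notin> {r. r > 0 \<and> (\<exists>x\<in>UNIV - D. open_ball b x r \<subseteq> UNIV - D)}"
    hence "(\<Union>p\<in>D. closed_ball b p R) = UNIV"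
      by (intro covering_if_no_inball[of b, OF sym]) auto
    thus "R \<in> {R. R > 0 \<and> (\<Union>p\<in>D. closed_ball b p R) = UNIV}" using \<open>R > 0\<close> by simp
  qed
qed

end
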